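(* Let $D$ be an integral domain, $\mathfrak{m}$ a maximal $w$-ideal of $D$, and $M$ a torsion-free $D$-module which is a $w$-module. Then the following are equivalent: (1) $M$ is an $\mathfrak{m}$-SM-module; (2) $M_{\mathfrak{m}}$ is a Noetherian $D_{\mathfrak{m}}$-module and for every nonzero finitely generated $D$-submodule $L$ of $M$ there exists $s\in D\setminus\mathfrak{m}$ such that $(L_w)_{\mathfrak{m}}\cap M=L_w:s$.
   Context: Let $K$ be the quotient field of $D$; $I_v=(I^{-1})^{-1}$ with $I^{-1}=\{a\in K\mid aI\subseteq D\}$; $\mathrm{GV}(D)$ is the set of finitely generated ideals $J$ with $J_v=D$. For a torsion-free module $N$, $N_w=\{x\in N\otimes K\mid xJ\subseteq N\text{ for some }J\in\mathrm{GV}(D)\}$; $N$ is a $w$-module if $N_w=N$; a $w$-ideal is an ideal that is a $w$-module, and a maximal $w$-ideal is a proper $w$-ideal maximal among proper $w$-ideals. A submodule $N$ of $M$ is $S$-$w$-finite if there exist $s\in S$ and a finitely generated submodule $F$ of $M$ with $Ns\subseteq F_w\subseteq N_w$; a $w$-module $M$ is an $S$-SM-module if every $w$-submodule (submodule $L$ with $L_w=L$) is $S$-$w$-finite. $M$ is an $\mathfrak{m}$-SM-module if it is an $S$-SM-module for $S=D\setminus\mathfrak{m}$. For $r\in D$ and a submodule $L'$, $L':r=\{x\in M\mid xr\in L'\}$. The intersection is taken in $M_{\mathfrak{m}}$ with $M$ identified with its image. *)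

theory Defs
  imports Main "HOL.Vector_Spaces" "HOL-Computational_Algebra.Fraction_Field"
begin

(* D is the type 'a :: idom, K = 'a fract its quotient field.
   A torsion-free D-module is represented (up to isomorphism) as a D-submodule M
   of a K-vector space V (type 'v, scalar multiplication scale); then N \<otimes> K
   is identified with the K-span of N inside V. *)

definition emb :: "'a::idom \<Rightarrow> 'a fract" where
  "emb d = Fract d 1"

definition fracD :: "'a::idom fract set" where
  "fracD = range emb"

definition finv :: "'a::idom fract set \<Rightarrow> 'a fract set" where
  "finv I = {a. \<forall>x\<in>I. a * x \<in> fracD}"

definition vclos :: "'a::idom fract set \<Rightarrow> 'a fract set" where
  "vclos I = finv (finv I)"

definition is_ideal :: "'a::idom set \<Rightarrow> bool" where
  "is_ideal I \<longleftrightarrow> 0 \<in> I \<and> (\<forall>x\<in>I. \<forall>y\<in>I. x + y \<in> I) \<and> (\<forall>r. \<forall>x\<in>I. r * x \<in> I)"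

definition fg_ideal :: "'a::idom set \<Rightarrow> bool" where
  "fg_ideal J \<longleftrightarrow> (\<exists>F. finite F \<and> J = {\<Sum>f\<in>F. r f * f | r. True})"

definition GV :: "'a::idom set set" where
  "GV = {J. fg_ideal J \<and> vclos (emb ` J) = fracD}"

definition wcl :: "('a::idom fract \<Rightarrow> 'v::ab_group_add \<Rightarrow> 'v) \<Rightarrow> 'v set \<Rightarrow> 'v set" where
  "wcl scale N = {x \<in> module.span scale N. \<exists>J\<in>GV. \<forall>j\<in>J. scale (emb j) x \<in> N}"

definition dsubmod :: "('a::idom fract \<Rightarrow> 'v::ab_group_add \<Rightarrow> 'v) \<Rightarrow> 'v set \<Rightarrow> bool" where
  "dsubmod scale N \<longleftrightarrow> 0 \<in> N \<and> (\<forall>x\<in>N. \<forall>y\<in>N. x + y \<in> N)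
     \<and> (\<forall>d. \<forall>x\<in>N. scale (emb d) x \<in> N)"

definition w_ideal :: "'a::idom set \<Rightarrow> bool" where
  "w_ideal I \<longleftrightarrow> is_ideal I \<and> wcl (*) (emb ` I) = emb ` I"

definition max_w_ideal :: "'a::idom set \<Rightarrow> bool" where
  "max_w_ideal m \<longleftrightarrow> w_ideal m \<and> m \<noteq> UNIV \<and>
     (\<forall>I. w_ideal I \<and> I \<noteq> UNIV \<and> m \<subseteq> I \<longrightarrow> I = m)"

definition Dspan :: "('a::idom fract \<Rightarrow> 'v::ab_group_add \<Rightarrow> 'v) \<Rightarrow> 'v set \<Rightarrow> 'v set" where
  "Dspan scale G = {\<Sum>g\<in>G. scale (emb (r g)) g | r. True}"

definition fg_dsub :: "('a::idom fract \<Rightarrow> 'v::ab_group_add \<Rightarrow> 'v) \<Rightarrow> 'v set \<Rightarrow> 'v set \<Rightarrow> bool" where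
  "fg_dsub scale M F \<longleftrightarrow> (\<exists>G. finite G \<and> G \<subseteq> M \<and> F = Dspan scale G)"

definition S_w_finite :: "('a::idom fract \<Rightarrow> 'v::ab_group_add \<Rightarrow> 'v) \<Rightarrow> 'a set \<Rightarrow> 'v set \<Rightarrow> 'v set \<Rightarrow> bool" where
  "S_w_finite scale S M N \<longleftrightarrow> (\<exists>s\<in>S. \<exists>F. fg_dsub scale M F \<and>
      scale (emb s) ` N \<subseteq> wcl scale F \<and> wcl scale F \<subseteq> wcl scale N)"

definition S_SM :: "('a::idom fract \<Rightarrow> 'v::ab_group_add \<Rightarrow> 'v) \<Rightarrow> 'a set \<Rightarrow> 'v set \<Rightarrow> bool" where
  "S_SM scale S M \<longleftrightarrow> dsubmod scale M \<and> wcl scale M = M \<and>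
     (\<forall>L. dsubmod scale L \<and> L \<subseteq> M \<and> wcl scale L = L \<longrightarrow> S_w_finite scale S M L)"

definition m_SM :: "('a::idom fract \<Rightarrow> 'v::ab_group_add \<Rightarrow> 'v) \<Rightarrow> 'a set \<Rightarrow> 'v set \<Rightarrow> bool" where
  "m_SM scale m M \<longleftrightarrow> S_SM scale (- m) M"

definition locD :: "'a::idom set \<Rightarrow> 'a fract set" where
  "locD m = {Fract a s | a s. s \<notin> m}"

definition locM :: "('a::idom fract \<Rightarrow> 'v::ab_group_add \<Rightarrow> 'v) \<Rightarrow> 'a set \<Rightarrow> 'v set \<Rightarrow> 'v set" where
  "locM scale m N = {scale (Fract 1 s) x | x s. x \<in> N \<and> s \<notin> m}"

definition rsubmod :: "('a::idom fract \<Rightarrow> 'v::ab_group_add \<Rightarrow> 'v) \<Rightarrow> 'a fract set \<Rightarrow> 'v set \<Rightarrow> bool" where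
  "rsubmod scale R N \<longleftrightarrow> 0 \<in> N \<and> (\<forall>x\<in>N. \<forall>y\<in>N. x + y \<in> N) \<and> (\<forall>r\<in>R. \<forall>x\<in>N. scale r x \<in> N)"

definition noetherian_over :: "('a::idom fract \<Rightarrow> 'v::ab_group_add \<Rightarrow> 'v) \<Rightarrow> 'a fract set \<Rightarrow> 'v set \<Rightarrow> bool" where
  "noetherian_over scale R P \<longleftrightarrow> rsubmod scale R P \<and>
     (\<forall>N. N \<subseteq> P \<and> rsubmod scale R N \<longrightarrow>
        (\<exists>G. finite G \<and> G \<subseteq> N \<and> N = {\<Sum>g\<in>G. scale (r g) g | r. \<forall>g\<in>G. r g \<in> R}))"

definition colon :: "('a::idom fract \<Rightarrow> 'v::ab_group_add \<Rightarrow> 'v) \<Rightarrow> 'v set \<Rightarrow> 'v set \<Rightarrow> 'a \<Rightarrow> 'v set" where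
  "colon scale M L' s = {x \<in> M. scale (emb s) x \<in> L'}"

end

theory Submission
  imports Defs
begin

(* Everything rests on two properties of the maximal w-ideal m: it is prime, and a GV-ideal
   contained in m is {0}, which can only happen when D is a field.  Hence N_w \<subseteq> N_m for every
   submodule N, so a submodule P of the w-module M with P_m \<inter> M \<subseteq> P is itself a w-module.
   Both N \<inter> M, for a D_m-submodule N of M_m, and (L_w)_m \<inter> M are of this kind; S-w-finiteness
   of the first yields finitely many D_m-generators of N, and of the second, after clearing the
   denominators of its generators, the colon description.  Conversely, for a w-submodule L lift
   finitely many D_m-generators of L_m into L, adjoin a nonzero element of L, and apply the colon
   condition to the submodule F they generate: L \<subseteq> F_m \<inter> M = F_w : s, so L s \<subseteq> F_w \<subseteq> L. *)

section \<open>The embedding of D into its quotient field\<close>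

lemma emb_add [simp]: "emb (a + b) = emb a + emb b"
  by (simp add: emb_def)

lemma emb_mult [simp]: "emb (a * b) = emb a * emb b"
  by (simp add: emb_def)

lemma emb_0 [simp]: "emb 0 = 0"
  by (simp add: emb_def Zero_fract_def)

lemma emb_1 [simp]: "emb 1 = 1"
  by (simp add: emb_def One_fract_def)

lemma emb_inject [simp]: "emb a = emb b \<longleftrightarrow> a = b"
  by (simp add: emb_def eq_fract)

lemma emb_eq_0_iff [simp]: "emb a = 0 \<longleftrightarrow> a = 0"
  using emb_inject[of a 0] by simp

lemma emb_in_emb_image [simp]: "emb d \<in> emb ` X \<longleftrightarrow> d \<in> X"
  by auto

lemma emb_sum: "emb (sum g A) = (\<Sum>x\<in>A. emb (g x))"
  by (induct A rule: infinite_finite_induct) auto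

lemma Fract_1_mult_emb: "s \<noteq> 0 \<Longrightarrow> Fract 1 s * emb s = 1"
  by (simp add: emb_def One_fract_def eq_fract)

lemma fracD_iff: "x \<in> fracD \<longleftrightarrow> (\<exists>d. x = emb d)"
  by (auto simp: fracD_def)

lemma emb_in_fracD [simp]: "emb d \<in> fracD"
  by (auto simp: fracD_iff)

lemma fracD_add: "x \<in> fracD \<Longrightarrow> y \<in> fracD \<Longrightarrow> x + y \<in> fracD"
  by (auto simp: fracD_iff simp flip: emb_add)

lemma fracD_mult: "x \<in> fracD \<Longrightarrow> y \<in> fracD \<Longrightarrow> x * y \<in> fracD"
  by (auto simp: fracD_iff simp flip: emb_mult)

lemma fracD_sum: "(\<And>x. x \<in> A \<Longrightarrow> f x \<in> fracD) \<Longrightarrow> sum f A \<in> fracD"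
  using emb_in_fracD[of 0] by (induct A rule: infinite_finite_induct) (auto simp: fracD_add)

lemma unit_if_fracD_UNIV:
  assumes "fracD = (UNIV :: 'a::idom fract set)" and "(a::'a) \<noteq> 0"
  obtains e where "a * e = 1"
proof -
  obtain e where "Fract 1 a = emb e"
    using assms(1) fracD_iff[of "Fract 1 a"] by auto
  then have "e * a = 1"
    using assms(2) by (simp add: emb_def eq_fract)
  then show thesis
    using that by (simp add: mult.commute)
qed

section \<open>GV-ideals\<close>

lemma finv_antimono: "X \<subseteq> Y \<Longrightarrow> finv Y \<subseteq> finv X"
  by (auto simp: finv_def)

lemma subset_finv_finv: "X \<subseteq> finv (finv X)"
  by (auto simp: finv_def mult.commute)

lemma finv_fracD: "finv fracD = fracD"
proof
  show "finv fracD \<subseteq> fracD"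
    unfolding finv_def using emb_in_fracD[of 1] by force
  show "fracD \<subseteq> finv fracD"
    by (auto simp: finv_def fracD_mult)
qed

lemma GV_finv: "J \<in> GV \<Longrightarrow> finv (emb ` J) = fracD"
  using finv_antimono[OF subset_finv_finv[of "emb ` J"]] subset_finv_finv[of "finv (emb ` J)"]
  by (simp add: GV_def vclos_def finv_fracD)

lemma UNIV_in_GV: "UNIV \<in> GV"
proof -
  have "fg_ideal (UNIV :: 'a set)"
    unfolding fg_ideal_def by (rule exI[of _ "{1}"]) auto
  moreover have "vclos (emb ` UNIV) = fracD"
    unfolding vclos_def fracD_def[symmetric] finv_fracD ..
  ultimately show ?thesis
    by (simp add: GV_def)
qed

lemma fracD_UNIV_if_zero_in_GV:
  assumes "{0 :: 'a::idom} \<in> GV"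
  shows "fracD = (UNIV :: 'a fract set)"
proof -
  have "finv (emb ` {0 :: 'a}) = UNIV"
    by (auto simp: finv_def fracD_iff intro: exI[of _ 0])
  then show ?thesis
    using GV_finv[OF assms] by simp
qed

lemma fg_ideal_generator:
  fixes a :: "'a::idom"
  assumes "finite F" and "a \<in> F"
  shows "a \<in> {\<Sum>f\<in>F. r f * f | r. True}"
proof -
  have "(\<Sum>f\<in>F. (if f = a then 1 else 0) * f) = (\<Sum>f\<in>F. if f = a then f else 0)"
    by (rule sum.cong) auto
  also have "\<dots> = a"
    using assms by simp
  finally show ?thesis
    by (intro CollectI exI[where x = "\<lambda>f. if f = a then 1 else 0"]) simp
qed

lemma fg_ideal_zero:
  assumes "fg_ideal J"
  shows "(0 :: 'a::idom) \<in> J"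
proof -
  obtain F where "J = {\<Sum>f\<in>F. r f * f | r. True}"
    using assms unfolding fg_ideal_def by blast
  then show ?thesis
    by (auto intro!: exI[where x = "\<lambda>_. 0"])
qed

lemma is_ideal_sum: "is_ideal I \<Longrightarrow> (\<And>x. x \<in> A \<Longrightarrow> f x \<in> I) \<Longrightarrow> sum f A \<in> I"
  by (induct A rule: infinite_finite_induct) (auto simp: is_ideal_def)

lemma is_ideal_zero: "is_ideal I \<Longrightarrow> 0 \<in> I"
  by (simp add: is_ideal_def)

lemma is_ideal_mult_left: "is_ideal I \<Longrightarrow> x \<in> I \<Longrightarrow> r * x \<in> I"
  by (simp add: is_ideal_def)

lemma is_ideal_mult_right: "is_ideal I \<Longrightarrow> x \<in> I \<Longrightarrow> x * r \<in> I"
  by (simp add: is_ideal_def mult.commute[of x])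

lemma is_ideal_add: "is_ideal I \<Longrightarrow> x \<in> I \<Longrightarrow> y \<in> I \<Longrightarrow> x + y \<in> I"
  by (simp add: is_ideal_def)

lemma is_ideal_INT: "(\<And>a. a \<in> A \<Longrightarrow> is_ideal (I a)) \<Longrightarrow> is_ideal (\<Inter>a\<in>A. I a)"
  by (simp add: is_ideal_def)

lemma finv_fg_ideal_if_generators:
  assumes "\<forall>f\<in>F. c * emb f \<in> fracD"
  shows "c \<in> finv (emb ` {\<Sum>f\<in>F. r f * f | r. True})"
  unfolding finv_def
proof safe
  fix r
  have "c * emb (\<Sum>f\<in>F. r f * f) = (\<Sum>f\<in>F. emb (r f) * (c * emb f))"
    by (simp add: emb_sum sum_distrib_left algebra_simps)
  also have "\<dots> \<in> fracD"
    using assms by (intro fracD_sum) (simp add: fracD_mult)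
  finally show "c * emb (\<Sum>f\<in>F. r f * f) \<in> fracD" .
qed

lemma GV_products_of_generators:
  assumes F1: "finite F1" "{\<Sum>f\<in>F1. r f * f | r. True} \<in> GV"
    and F2: "finite F2" "{\<Sum>f\<in>F2. r f * f | r. True} \<in> GV"
  shows "{\<Sum>p\<in>(\<lambda>(a, b). a * b) ` (F1 \<times> F2). r p * p | r. True} \<in> GV"
proof -
  define P where "P = (\<lambda>(a, b). a * b) ` (F1 \<times> F2)"
  define J where "J = {\<Sum>p\<in>P. r p * p | r. True}"
  have P: "finite P"
    using F1(1) F2(1) by (simp add: P_def)
  have "finv (emb ` J) \<subseteq> fracD"
  proof
    fix c assume c: "c \<in> finv (emb ` J)"
    have "c * emb a * emb b \<in> fracD" if "a \<in> F1" "b \<in> F2" for a b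
    proof -
      have "a * b \<in> J"
        unfolding J_def using that by (intro fg_ideal_generator[OF P]) (force simp: P_def)
      then have "c * emb (a * b) \<in> fracD"
        using c unfolding finv_def by blast
      then show ?thesis
        by (simp add: mult.assoc)
    qed
    then have "c * emb a \<in> finv (emb ` {\<Sum>f\<in>F2. r f * f | r. True})" if "a \<in> F1" for a
      using that by (intro finv_fg_ideal_if_generators) blast
    then have "c \<in> finv (emb ` {\<Sum>f\<in>F1. r f * f | r. True})"
      using GV_finv[OF F2(2)] by (intro finv_fg_ideal_if_generators) auto
    then show "c \<in> fracD"
      using GV_finv[OF F1(2)] by simp
  qed
  moreover have "fracD \<subseteq> finv (emb ` J)"
    by (auto simp: finv_def fracD_iff simp flip: emb_mult)
  moreover have "fg_ideal J"
    unfolding fg_ideal_def J_def using P by blast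
  ultimately have "J \<in> GV"
    by (simp add: GV_def vclos_def finv_fracD subset_antisym)
  then show ?thesis
    unfolding J_def P_def .
qed

lemma GV_subset_if_products:
  assumes "J1 \<in> GV" and "J2 \<in> GV" and "is_ideal I" and "\<forall>a\<in>J1. \<forall>b\<in>J2. a * b \<in> I"
  shows "\<exists>J\<in>GV. J \<subseteq> I"
proof -
  obtain F1 where F1: "finite F1" "J1 = {\<Sum>f\<in>F1. r f * f | r. True}"
    using assms(1) by (auto simp: GV_def fg_ideal_def)
  obtain F2 where F2: "finite F2" "J2 = {\<Sum>f\<in>F2. r f * f | r. True}"
    using assms(2) by (auto simp: GV_def fg_ideal_def)
  define P where "P = (\<lambda>(a, b). a * b) ` (F1 \<times> F2)"
  have "P \<subseteq> I"
  proof
    fix p assume "p \<in> P"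
    then obtain a b where "a \<in> F1" "b \<in> F2" "p = a * b"
      by (auto simp: P_def)
    then show "p \<in> I"
      using assms(4) fg_ideal_generator[OF F1(1)] fg_ideal_generator[OF F2(1)]
      unfolding F1(2) F2(2) by blast
  qed
  then have "{\<Sum>p\<in>P. r p * p | r. True} \<subseteq> I"
    using assms(3) by (auto intro!: is_ideal_sum is_ideal_mult_left)
  moreover have "{\<Sum>p\<in>P. r p * p | r. True} \<in> GV"
    unfolding P_def using F1 F2 assms(1,2) by (intro GV_products_of_generators) simp_all
  ultimately show ?thesis
    by blast
qed

lemma GV_subset_Int:
  assumes "J1 \<in> GV" "J1 \<subseteq> I1" "is_ideal I1" and "J2 \<in> GV" "J2 \<subseteq> I2" "is_ideal I2"
  shows "\<exists>J\<in>GV. J \<subseteq> I1 \<inter> I2"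
proof (rule GV_subset_if_products[OF assms(1,4)])
  show "is_ideal (I1 \<inter> I2)"
    using assms(3,6) by (simp add: is_ideal_def)
  show "\<forall>a\<in>J1. \<forall>b\<in>J2. a * b \<in> I1 \<inter> I2"
  proof (intro ballI IntI)
    fix a b assume "a \<in> J1" "b \<in> J2"
    then have "a \<in> I1" "b \<in> I2"
      using assms(2,5) by blast+
    then show "a * b \<in> I1" "a * b \<in> I2"
      using assms(3,6) by (simp_all add: is_ideal_mult_left is_ideal_mult_right)
  qed
qed

lemma GV_subset_INT:
  assumes "finite A" and "\<And>a. a \<in> A \<Longrightarrow> is_ideal (I a)" and "\<And>a. a \<in> A \<Longrightarrow> \<exists>J\<in>GV. J \<subseteq> I a"
  shows "\<exists>J\<in>GV. J \<subseteq> (\<Inter>a\<in>A. I a)"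
  using assms
proof (induct A rule: finite_induct)
  case empty
  show ?case
    using UNIV_in_GV by auto
next
  case (insert a A)
  obtain J1 where "J1 \<in> GV" "J1 \<subseteq> I a"
    using insert.prems(2) by blast
  moreover obtain J2 where "J2 \<in> GV" "J2 \<subseteq> (\<Inter>a\<in>A. I a)"
    using insert.hyps(3) insert.prems by blast
  moreover have "is_ideal (I a)" "is_ideal (\<Inter>a\<in>A. I a)"
    using insert.prems(1) by (simp_all add: is_ideal_INT)
  ultimately show ?case
    using GV_subset_Int[of J1 "I a" J2 "\<Inter>a\<in>A. I a"] by simp
qed

section \<open>The w-closure in a vector space over the quotient field\<close>

locale fract_vector_space = vector_space scale
  for scale :: "'a::idom fract \<Rightarrow> 'v::ab_group_add \<Rightarrow> 'v"
begin

lemma dsubmod_zero: "dsubmod scale N \<Longrightarrow> 0 \<in> N"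
  by (simp add: dsubmod_def)

lemma dsubmod_add: "dsubmod scale N \<Longrightarrow> x \<in> N \<Longrightarrow> y \<in> N \<Longrightarrow> x + y \<in> N"
  by (simp add: dsubmod_def)

lemma dsubmod_scale: "dsubmod scale N \<Longrightarrow> x \<in> N \<Longrightarrow> scale (emb d) x \<in> N"
  by (simp add: dsubmod_def)

lemma dsubmod_sum: "dsubmod scale N \<Longrightarrow> (\<And>x. x \<in> A \<Longrightarrow> f x \<in> N) \<Longrightarrow> sum f A \<in> N"
  by (induct A rule: infinite_finite_induct) (auto simp: dsubmod_zero dsubmod_add)

lemma dsubmod_Int: "dsubmod scale N \<Longrightarrow> dsubmod scale N' \<Longrightarrow> dsubmod scale (N \<inter> N')"
  by (simp add: dsubmod_def)

lemma dsubmod_vimage_scale: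
  assumes N: "dsubmod scale N"
  shows "dsubmod scale {x. scale c x \<in> N}"
  unfolding dsubmod_def
proof (intro conjI ballI allI CollectI)
  show "scale c 0 \<in> N"
    using dsubmod_zero[OF N] by simp
next
  fix x y assume "x \<in> {x. scale c x \<in> N}" "y \<in> {x. scale c x \<in> N}"
  then show "scale c (x + y) \<in> N"
    using dsubmod_add[OF N] by (simp add: scale_right_distrib)
next
  fix d x assume "x \<in> {x. scale c x \<in> N}"
  then have "scale c x \<in> N"
    by simp
  then have "scale (emb d) (scale c x) \<in> N"
    by (rule dsubmod_scale[OF N])
  then show "scale c (scale (emb d) x) \<in> N"
    by (simp add: mult.commute)
qed

lemma is_ideal_conductor:
  assumes N: "dsubmod scale N"
  shows "is_ideal {d. scale (emb d) x \<in> N}"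
  unfolding is_ideal_def
proof (intro conjI ballI allI CollectI)
  show "scale (emb 0) x \<in> N"
    using dsubmod_zero[OF N] by simp
next
  fix a b assume "a \<in> {d. scale (emb d) x \<in> N}" "b \<in> {d. scale (emb d) x \<in> N}"
  then show "scale (emb (a + b)) x \<in> N"
    using dsubmod_add[OF N] by (simp add: scale_left_distrib)
next
  fix r a assume "a \<in> {d. scale (emb d) x \<in> N}"
  then have "scale (emb a) x \<in> N"
    by simp
  then have "scale (emb r) (scale (emb a) x) \<in> N"
    by (rule dsubmod_scale[OF N])
  then show "scale (emb (r * a)) x \<in> N"
    by simp
qed

lemma Dspan_dsubmod: "dsubmod scale (Dspan scale G)"
  unfolding dsubmod_def Dspan_def
proof (intro conjI ballI allI)
  show "0 \<in> {\<Sum>g\<in>G. scale (emb (r g)) g | r. True}"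
    by (intro CollectI exI[where x = "\<lambda>_. 0"]) simp
next
  fix x y assume "x \<in> {\<Sum>g\<in>G. scale (emb (r g)) g | r. True}"
    and "y \<in> {\<Sum>g\<in>G. scale (emb (r g)) g | r. True}"
  then obtain r r' where "x = (\<Sum>g\<in>G. scale (emb (r g)) g)" "y = (\<Sum>g\<in>G. scale (emb (r' g)) g)"
    by auto
  then have "x + y = (\<Sum>g\<in>G. scale (emb (r g + r' g)) g)"
    by (simp add: sum.distrib scale_left_distrib)
  then show "x + y \<in> {\<Sum>g\<in>G. scale (emb (r g)) g | r. True}"
    by (intro CollectI exI[where x = "\<lambda>g. r g + r' g"]) simp
next
  fix d x assume "x \<in> {\<Sum>g\<in>G. scale (emb (r g)) g | r. True}"
  then obtain r where "x = (\<Sum>g\<in>G. scale (emb (r g)) g)"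
    by auto
  then have "scale (emb d) x = (\<Sum>g\<in>G. scale (emb (d * r g)) g)"
    by (simp add: scale_sum_right)
  then show "scale (emb d) x \<in> {\<Sum>g\<in>G. scale (emb (r g)) g | r. True}"
    by (intro CollectI exI[where x = "\<lambda>g. d * r g"]) simp
qed

lemma Dspan_base:
  assumes "finite G" and "g \<in> G"
  shows "g \<in> Dspan scale G"
proof -
  have "(\<Sum>h\<in>G. scale (emb (if h = g then 1 else 0)) h) = (\<Sum>h\<in>G. if h = g then h else 0)"
    by (rule sum.cong) auto
  also have "\<dots> = g"
    using assms by simp
  finally show ?thesis
    unfolding Dspan_def by (intro CollectI exI[where x = "\<lambda>h. if h = g then 1 else 0"]) simp
qed

lemma Dspan_subset: "G \<subseteq> N \<Longrightarrow> dsubmod scale N \<Longrightarrow> Dspan scale G \<subseteq> N"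
  by (auto simp: Dspan_def intro!: dsubmod_sum dsubmod_scale)

lemma wcl_iff: "x \<in> wcl scale N \<longleftrightarrow> x \<in> span N \<and> (\<exists>J\<in>GV. J \<subseteq> {d. scale (emb d) x \<in> N})"
  by (auto simp: wcl_def)

lemma wcl_mono:
  assumes "A \<subseteq> B"
  shows "wcl scale A \<subseteq> wcl scale B"
proof
  fix x assume "x \<in> wcl scale A"
  then obtain J where "x \<in> span A" "J \<in> GV" "J \<subseteq> {d. scale (emb d) x \<in> A}"
    unfolding wcl_iff by blast
  moreover have "span A \<subseteq> span B"
    by (rule span_mono[OF assms])
  ultimately show "x \<in> wcl scale B"
    unfolding wcl_iff using assms by blast
qed

lemma subset_wcl:
  assumes N: "dsubmod scale N"
  shows "N \<subseteq> wcl scale N"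
proof
  fix x assume "x \<in> N"
  then have "UNIV \<subseteq> {d. scale (emb d) x \<in> N}"
    using dsubmod_scale[OF N] by blast
  then show "x \<in> wcl scale N"
    unfolding wcl_iff using span_base[OF \<open>x \<in> N\<close>] UNIV_in_GV by blast
qed

lemma wcl_dsubmod:
  assumes N: "dsubmod scale N"
  shows "dsubmod scale (wcl scale N)"
  unfolding dsubmod_def
proof (intro conjI ballI allI)
  show "0 \<in> wcl scale N"
    using subset_wcl[OF N] dsubmod_zero[OF N] by blast
next
  fix x y assume "x \<in> wcl scale N" "y \<in> wcl scale N"
  then obtain J1 J2 where x: "x \<in> span N" "J1 \<in> GV" "J1 \<subseteq> {d. scale (emb d) x \<in> N}"
    and y: "y \<in> span N" "J2 \<in> GV" "J2 \<subseteq> {d. scale (emb d) y \<in> N}"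
    unfolding wcl_iff by blast
  obtain J where J: "J \<in> GV" "J \<subseteq> {d. scale (emb d) x \<in> N} \<inter> {d. scale (emb d) y \<in> N}"
    using GV_subset_Int[OF x(2,3) is_ideal_conductor[OF N] y(2,3) is_ideal_conductor[OF N]] by blast
  have "J \<subseteq> {d. scale (emb d) (x + y) \<in> N}"
    using J(2) dsubmod_add[OF N] by (auto simp: scale_right_distrib)
  then show "x + y \<in> wcl scale N"
    unfolding wcl_iff using span_add[OF x(1) y(1)] J(1) by blast
next
  fix d x assume "x \<in> wcl scale N"
  then obtain J where x: "x \<in> span N" "J \<in> GV" "J \<subseteq> {d. scale (emb d) x \<in> N}"
    unfolding wcl_iff by blast
  have "J \<subseteq> {j. scale (emb j) (scale (emb d) x) \<in> N}"
  proof
    fix j assume "j \<in> J"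
    then have "scale (emb d) (scale (emb j) x) \<in> N"
      using x(3) dsubmod_scale[OF N] by blast
    then show "j \<in> {j. scale (emb j) (scale (emb d) x) \<in> N}"
      by (simp add: mult.commute)
  qed
  then show "scale (emb d) x \<in> wcl scale N"
    unfolding wcl_iff using span_scale[OF x(1)] x(2) by blast
qed

lemma wcl_idem:
  assumes N: "dsubmod scale N"
  shows "wcl scale (wcl scale N) = wcl scale N"
proof
  show "wcl scale N \<subseteq> wcl scale (wcl scale N)"
    by (rule subset_wcl[OF wcl_dsubmod[OF N]])
next
  show "wcl scale (wcl scale N) \<subseteq> wcl scale N"
  proof
    fix x assume "x \<in> wcl scale (wcl scale N)"
    then obtain J where x: "x \<in> span (wcl scale N)" "J \<in> GV"
        "J \<subseteq> {d. scale (emb d) x \<in> wcl scale N}"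
      unfolding wcl_iff by blast
    have "fg_ideal J"
      using x(2) by (simp add: GV_def)
    then obtain F where F: "finite F" "J = {\<Sum>f\<in>F. r f * f | r. True}"
      unfolding fg_ideal_def by blast
    have generator_GV: "\<exists>Q\<in>GV. Q \<subseteq> {d. scale (emb d) (scale (emb f) x) \<in> N}" if "f \<in> F" for f
    proof -
      have "f \<in> J"
        unfolding F(2) by (rule fg_ideal_generator[OF F(1) that])
      then have "scale (emb f) x \<in> wcl scale N"
        using x(3) by blast
      then show ?thesis
        unfolding wcl_iff by blast
    qed
    have "\<exists>Q\<in>GV. Q \<subseteq> (\<Inter>f\<in>F. {d. scale (emb d) (scale (emb f) x) \<in> N})"
      by (rule GV_subset_INT[OF F(1) is_ideal_conductor[OF N] generator_GV])
    then obtain Q where Q: "Q \<in> GV" "Q \<subseteq> (\<Inter>f\<in>F. {d. scale (emb d) (scale (emb f) x) \<in> N})"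
      by blast
    have "q * j \<in> {d. scale (emb d) x \<in> N}" if "q \<in> Q" "j \<in> J" for q j
    proof -
      obtain r where j: "j = (\<Sum>f\<in>F. r f * f)"
        using \<open>j \<in> J\<close> F(2) by auto
      have "scale (emb (q * j)) x = (\<Sum>f\<in>F. scale (emb (r f)) (scale (emb q) (scale (emb f) x)))"
        unfolding j emb_sum sum_distrib_left scale_sum_left
        by (rule sum.cong) (simp_all add: mult.commute mult.left_commute)
      also have "\<dots> \<in> N"
      proof (rule dsubmod_sum[OF N])
        fix f assume "f \<in> F"
        then have "scale (emb q) (scale (emb f) x) \<in> N"
          using Q(2) \<open>q \<in> Q\<close> by blast
        then show "scale (emb (r f)) (scale (emb q) (scale (emb f) x)) \<in> N"
          by (rule dsubmod_scale[OF N])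
      qed
      finally show ?thesis
        by simp
    qed
    then obtain J' where "J' \<in> GV" "J' \<subseteq> {d. scale (emb d) x \<in> N}"
      using GV_subset_if_products[OF Q(1) x(2) is_ideal_conductor[OF N]] by blast
    moreover have "x \<in> span N"
    proof -
      have "wcl scale N \<subseteq> span N"
        by (auto simp: wcl_iff)
      then have "span (wcl scale N) \<subseteq> span N"
        using span_mono[of "wcl scale N" "span N"] by (simp add: span_span)
      then show ?thesis
        using x(1) by blast
    qed
    ultimately show "x \<in> wcl scale N"
      unfolding wcl_iff by blast
  qed
qed

lemma wcl_scale_image:
  assumes "scale c ` F \<subseteq> W"
  shows "scale c ` wcl scale F \<subseteq> wcl scale W"
proof
  fix y assume "y \<in> scale c ` wcl scale F"
  then obtain x where y: "y = scale c x" and "x \<in> wcl scale F"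
    by blast
  then obtain J where x: "x \<in> span F" "J \<in> GV" "J \<subseteq> {d. scale (emb d) x \<in> F}"
    unfolding wcl_iff by blast
  have "subspace {x. scale c x \<in> span W}"
  proof (rule subspaceI)
    show "0 \<in> {x. scale c x \<in> span W}"
      by (simp add: span_zero)
  next
    fix u v assume "u \<in> {x. scale c x \<in> span W}" "v \<in> {x. scale c x \<in> span W}"
    then show "u + v \<in> {x. scale c x \<in> span W}"
      by (simp add: scale_right_distrib span_add)
  next
    fix a u assume "u \<in> {x. scale c x \<in> span W}"
    then have "scale c u \<in> span W"
      by simp
    then have "scale a (scale c u) \<in> span W"
      by (rule span_scale)
    then show "scale a u \<in> {x. scale c x \<in> span W}"
      by (simp add: mult.commute)
  qed
  moreover have "F \<subseteq> {x. scale c x \<in> span W}"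
    using assms span_base by blast
  ultimately have "y \<in> span W"
    using span_minimal x(1) y by blast
  moreover have "J \<subseteq> {d. scale (emb d) y \<in> W}"
  proof
    fix d assume "d \<in> J"
    then have "scale c (scale (emb d) x) \<in> W"
      using x(3) assms by blast
    then show "d \<in> {d. scale (emb d) y \<in> W}"
      by (simp add: y mult.commute)
  qed
  ultimately show "y \<in> wcl scale W"
    unfolding wcl_iff using x(2) by blast
qed

lemma S_w_finite_iff:
  assumes L: "dsubmod scale L" "L \<subseteq> M" "wcl scale L = L"
  shows "S_w_finite scale S M L \<longleftrightarrow>
    (\<exists>s\<in>S. \<exists>G. finite G \<and> G \<subseteq> L \<and> scale (emb s) ` L \<subseteq> wcl scale (Dspan scale G))"
proof
  assume "S_w_finite scale S M L"
  then obtain s G where s: "s \<in> S" and G: "finite G" "scale (emb s) ` L \<subseteq> wcl scale (Dspan scale G)"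
    "wcl scale (Dspan scale G) \<subseteq> wcl scale L"
    unfolding S_w_finite_def fg_dsub_def by blast
  have "G \<subseteq> L"
    using Dspan_base[OF G(1)] subset_wcl[OF Dspan_dsubmod] G(3) L(3) by blast
  then show "\<exists>s\<in>S. \<exists>G. finite G \<and> G \<subseteq> L \<and> scale (emb s) ` L \<subseteq> wcl scale (Dspan scale G)"
    using s G by blast
next
  assume "\<exists>s\<in>S. \<exists>G. finite G \<and> G \<subseteq> L \<and> scale (emb s) ` L \<subseteq> wcl scale (Dspan scale G)"
  then obtain s G where "s \<in> S" "finite G" "G \<subseteq> L" "scale (emb s) ` L \<subseteq> wcl scale (Dspan scale G)"
    by blast
  moreover have "wcl scale (Dspan scale G) \<subseteq> wcl scale L"
    using Dspan_subset[OF \<open>G \<subseteq> L\<close> L(1)] by (rule wcl_mono)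
  moreover have "fg_dsub scale M (Dspan scale G)"
    unfolding fg_dsub_def using \<open>finite G\<close> \<open>G \<subseteq> L\<close> L(2) by blast
  ultimately show "S_w_finite scale S M L"
    unfolding S_w_finite_def by blast
qed

lemma span_eq_if_fracD_UNIV:
  assumes "fracD = (UNIV :: 'a fract set)" and N: "dsubmod scale N"
  shows "span N = N"
proof -
  have "subspace N"
  proof (rule subspaceI)
    show "0 \<in> N"
      by (rule dsubmod_zero[OF N])
    show "x + y \<in> N" if "x \<in> N" "y \<in> N" for x y
      using dsubmod_add[OF N that] .
    show "scale c x \<in> N" if "x \<in> N" for c x
    proof -
      obtain d where "c = emb d"
        using assms(1) fracD_iff[of c] by auto
      then show ?thesis
        using dsubmod_scale[OF N that] by simp
    qed
  qed
  then show ?thesis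
    by simp
qed

end

section \<open>Maximal w-ideals\<close>

interpretation fract_mult: fract_vector_space "(*) :: 'a::idom fract \<Rightarrow> 'a fract \<Rightarrow> 'a fract"
  by unfold_locales (simp_all add: distrib_left distrib_right)

lemma max_w_ideal_is_ideal: "max_w_ideal m \<Longrightarrow> is_ideal m"
  by (simp add: max_w_ideal_def w_ideal_def)

lemma max_w_ideal_one_notin:
  assumes m: "max_w_ideal m"
  shows "1 \<notin> m"
proof
  assume "1 \<in> m"
  then have "r \<in> m" for r
    using is_ideal_mult_left[OF max_w_ideal_is_ideal[OF m], of 1 r] by simp
  then have "m = UNIV"
    by blast
  then show False
    using m by (simp add: max_w_ideal_def)
qed

lemma max_w_ideal_nonzero: "max_w_ideal m \<Longrightarrow> s \<notin> m \<Longrightarrow> s \<noteq> 0"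
  using is_ideal_zero[OF max_w_ideal_is_ideal] by blast

lemma dsubmod_emb_ideal:
  assumes X: "is_ideal X"
  shows "dsubmod (*) (emb ` X)"
  unfolding dsubmod_def
proof (intro conjI ballI allI)
  show "0 \<in> emb ` X"
    using emb_in_emb_image[of 0 X] is_ideal_zero[OF X] by simp
next
  fix u v assume "u \<in> emb ` X" "v \<in> emb ` X"
  then obtain x y where "x \<in> X" "y \<in> X" "u = emb x" "v = emb y"
    by blast
  then show "u + v \<in> emb ` X"
    using is_ideal_add[OF X] by (simp flip: emb_add)
next
  fix d u assume "u \<in> emb ` X"
  then obtain x where "x \<in> X" "u = emb x"
    by blast
  then show "emb d * u \<in> emb ` X"
    using is_ideal_mult_left[OF X] by (simp flip: emb_mult)
qed

lemma is_ideal_emb_vimage: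
  assumes W: "dsubmod (*) W"
  shows "is_ideal {d. emb d \<in> W}"
  unfolding is_ideal_def
  using fract_mult.dsubmod_zero[OF W] fract_mult.dsubmod_add[OF W] fract_mult.dsubmod_scale[OF W]
  by simp

lemma wcl_emb_subset_fracD: "wcl (*) (emb ` X) \<subseteq> fracD"
proof
  fix x assume "x \<in> wcl (*) (emb ` X)"
  then obtain J where J: "J \<in> GV" "J \<subseteq> {d. emb d * x \<in> emb ` X}"
    unfolding fract_mult.wcl_iff by blast
  have "x * emb j \<in> fracD" if "j \<in> J" for j
    using J(2) that by (auto simp: fracD_def mult.commute)
  then have "x \<in> finv (emb ` J)"
    by (auto simp: finv_def)
  then show "x \<in> fracD"
    using GV_finv[OF J(1)] by simp
qed

lemma w_ideal_wcl:
  assumes X: "is_ideal X"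
  shows "w_ideal {d. emb d \<in> wcl (*) (emb ` X)}"
proof -
  let ?W = "wcl (*) (emb ` X)"
  have "emb ` {d. emb d \<in> ?W} = ?W"
  proof
    show "?W \<subseteq> emb ` {d. emb d \<in> ?W}"
    proof
      fix w assume "w \<in> ?W"
      moreover obtain d where "w = emb d"
        using wcl_emb_subset_fracD[of X] \<open>w \<in> ?W\<close> fracD_iff by blast
      ultimately show "w \<in> emb ` {d. emb d \<in> ?W}"
        by simp
    qed
  qed blast
  moreover have "is_ideal {d. emb d \<in> ?W}"
    by (rule is_ideal_emb_vimage[OF fract_mult.wcl_dsubmod[OF dsubmod_emb_ideal[OF X]]])
  ultimately show ?thesis
    unfolding w_ideal_def using fract_mult.wcl_idem[OF dsubmod_emb_ideal[OF X]] by simp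
qed

lemma GV_subset_if_max_w_ideal_psubset:
  assumes m: "max_w_ideal m" and X: "is_ideal X" "m \<subseteq> X" "\<not> X \<subseteq> m"
  shows "\<exists>J\<in>GV. J \<subseteq> X"
proof -
  define I where "I = {d. emb d \<in> wcl (*) (emb ` X)}"
  have "w_ideal I"
    unfolding I_def by (rule w_ideal_wcl[OF X(1)])
  have "X \<subseteq> I"
    using fract_mult.subset_wcl[OF dsubmod_emb_ideal[OF X(1)]] by (auto simp: I_def)
  have "I = UNIV"
  proof (rule ccontr)
    assume "I \<noteq> UNIV"
    moreover have "m \<subseteq> I"
      using X(2) \<open>X \<subseteq> I\<close> by (rule order_trans)
    ultimately have "I = m"
      using m \<open>w_ideal I\<close> unfolding max_w_ideal_def by blast
    then show False
      using X(3) \<open>X \<subseteq> I\<close> by blast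
  qed
  then have "emb 1 \<in> wcl (*) (emb ` X)"
    unfolding I_def by blast
  then obtain J where "J \<in> GV" "J \<subseteq> {d. emb d * emb 1 \<in> emb ` X}"
    unfolding fract_mult.wcl_iff by blast
  then show ?thesis
    by auto
qed

lemma GV_subset_max_w_ideal:
  assumes m: "max_w_ideal m" and J: "J \<in> GV" "J \<subseteq> m"
  shows "J = {0}"
proof (rule ccontr)
  assume "J \<noteq> {0}"
  moreover have "fg_ideal J"
    using J(1) by (simp add: GV_def)
  then have "0 \<in> J"
    by (rule fg_ideal_zero)
  ultimately obtain j where j: "j \<in> J" "j \<noteq> 0"
    by blast
  have "inverse (emb j) * emb j \<in> fract_mult.span (emb ` J)"
    using j(1) by (intro fract_mult.span_scale fract_mult.span_base) simp
  then have "1 \<in> fract_mult.span (emb ` J)"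
    using j(2) by simp
  moreover have "J \<subseteq> {d. emb d * 1 \<in> emb ` J}"
    by simp
  ultimately have "1 \<in> wcl (*) (emb ` J)"
    unfolding fract_mult.wcl_iff using J(1) by blast
  also have "\<dots> \<subseteq> wcl (*) (emb ` m)"
    using J(2) by (intro fract_mult.wcl_mono) blast
  also have "\<dots> = emb ` m"
    using m by (simp add: max_w_ideal_def w_ideal_def)
  finally have "emb 1 \<in> emb ` m"
    by simp
  then show False
    using max_w_ideal_one_notin[OF m] by (simp only: emb_in_emb_image)
qed

lemma GV_meets_compl_max_w_ideal:
  fixes m :: "'a::idom set"
  assumes "max_w_ideal m" and "J \<in> GV"
  shows "(\<exists>j\<in>J. j \<notin> m) \<or> fracD = (UNIV :: 'a::idom fract set)"
proof (cases "J \<subseteq> m")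
  case True
  then have "J = {0}"
    by (rule GV_subset_max_w_ideal[OF assms])
  with assms(2) have "{0 :: 'a} \<in> GV"
    by simp
  then show ?thesis
    using fracD_UNIV_if_zero_in_GV by blast
qed blast

lemma is_ideal_add_principal:
  assumes m: "is_ideal m"
  shows "is_ideal {x + a * r | x r. x \<in> m}"
  unfolding is_ideal_def
proof (intro conjI ballI allI)
  show "0 \<in> {x + a * r | x r. x \<in> m}"
    using is_ideal_zero[OF m] by (intro CollectI exI[of _ 0]) simp
next
  fix u v assume "u \<in> {x + a * r | x r. x \<in> m}" "v \<in> {x + a * r | x r. x \<in> m}"
  then obtain x r y s where "x \<in> m" "y \<in> m" "u = x + a * r" "v = y + a * s"
    by blast
  moreover from this have "u + v = (x + y) + a * (r + s)"
    by (simp add: algebra_simps)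
  ultimately show "u + v \<in> {x + a * r | x r. x \<in> m}"
    using is_ideal_add[OF m] by blast
next
  fix c u assume "u \<in> {x + a * r | x r. x \<in> m}"
  then obtain x r where "x \<in> m" "u = x + a * r"
    by blast
  moreover from this have "c * u = c * x + a * (c * r)"
    by (simp add: algebra_simps)
  ultimately show "c * u \<in> {x + a * r | x r. x \<in> m}"
    using is_ideal_mult_left[OF m] by blast
qed

lemma max_w_ideal_prime:
  fixes m :: "'a::idom set"
  assumes m: "max_w_ideal m" and a: "a \<notin> m" and b: "b \<notin> m"
  shows "a * b \<notin> m"
proof
  assume ab: "a * b \<in> m"
  have m_ideal: "is_ideal m"
    by (rule max_w_ideal_is_ideal[OF m])
  have cover: "\<exists>J\<in>GV. J \<subseteq> {x + c * r | x r. x \<in> m}" if "c \<notin> m" for c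
  proof (rule GV_subset_if_max_w_ideal_psubset[OF m is_ideal_add_principal[OF m_ideal]])
    have "x = x + c * 0" for x
      by simp
    then show "m \<subseteq> {x + c * r | x r. x \<in> m}"
      by blast
    have "c = 0 + c * 1"
      by simp
    then have "c \<in> {x + c * r | x r. x \<in> m}"
      using is_ideal_zero[OF m_ideal] by blast
    then show "\<not> {x + c * r | x r. x \<in> m} \<subseteq> m"
      using that by blast
  qed
  obtain Ja where Ja: "Ja \<in> GV" "Ja \<subseteq> {x + a * r | x r. x \<in> m}"
    using cover[OF a] by blast
  obtain Jb where Jb: "Jb \<in> GV" "Jb \<subseteq> {x + b * r | x r. x \<in> m}"
    using cover[OF b] by blast
  have "c * d \<in> m" if cd: "c \<in> Ja" "d \<in> Jb" for c d
  proof -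
    obtain x r y s where xy: "x \<in> m" "y \<in> m" and "c = x + a * r" "d = y + b * s"
      using cd Ja(2) Jb(2) by blast
    then have "c * d = d * x + (a * r) * y + (r * s) * (a * b)"
      by (simp add: algebra_simps)
    moreover have "d * x + (a * r) * y + (r * s) * (a * b) \<in> m"
      using is_ideal_mult_left[OF m_ideal] xy ab by (intro is_ideal_add[OF m_ideal]) auto
    ultimately show ?thesis
      by simp
  qed
  then obtain J where "J \<in> GV" "J \<subseteq> m"
    using GV_subset_if_products[OF Ja(1) Jb(1) m_ideal] by blast
  then have "fracD = (UNIV :: 'a fract set)"
    using GV_meets_compl_max_w_ideal[OF m] by blast
  then obtain e where "a * e = 1"
    using unit_if_fracD_UNIV max_w_ideal_nonzero[OF m a] by blast
  have "e * (a * b) = (a * e) * b"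
    by (metis mult.assoc mult.commute)
  also have "\<dots> = b"
    using \<open>a * e = 1\<close> by simp
  finally show False
    using b is_ideal_mult_left[OF m_ideal ab, of e] by metis
qed

section \<open>Localization at a maximal w-ideal\<close>

definition rspan :: "('a::idom fract \<Rightarrow> 'v::ab_group_add \<Rightarrow> 'v) \<Rightarrow> 'a fract set \<Rightarrow> 'v set \<Rightarrow> 'v set"
  where "rspan scale R G = {\<Sum>g\<in>G. scale (r g) g | r. \<forall>g\<in>G. r g \<in> R}"

lemma noetherian_over_iff:
  "noetherian_over scale R P \<longleftrightarrow> rsubmod scale R P \<and>
     (\<forall>N. N \<subseteq> P \<and> rsubmod scale R N \<longrightarrow> (\<exists>G. finite G \<and> G \<subseteq> N \<and> N = rspan scale R G))"
  by (simp add: noetherian_over_def rspan_def)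

lemma (in fract_vector_space) rsubmod_sum: "rsubmod scale R N \<Longrightarrow> (\<And>x. x \<in> A \<Longrightarrow> f x \<in> N) \<Longrightarrow> sum f A \<in> N"
  by (induct A rule: infinite_finite_induct) (auto simp: rsubmod_def)

lemma (in fract_vector_space) rspan_subset:
  assumes "G \<subseteq> N" and N: "rsubmod scale R N"
  shows "rspan scale R G \<subseteq> N"
proof
  fix y assume "y \<in> rspan scale R G"
  then obtain r where y: "y = (\<Sum>g\<in>G. scale (r g) g)" and r: "\<forall>g\<in>G. r g \<in> R"
    unfolding rspan_def by blast
  show "y \<in> N"
    unfolding y using assms r by (intro rsubmod_sum[OF N]) (auto simp: rsubmod_def)
qed

locale max_w_localization = fract_vector_space scale
  for scale :: "'a::idom fract \<Rightarrow> 'v::ab_group_add \<Rightarrow> 'v" +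
  fixes m :: "'a set"
  assumes max_w_ideal: "max_w_ideal m"
begin

lemma notin_m_nonzero: "s \<notin> m \<Longrightarrow> s \<noteq> 0"
  by (rule max_w_ideal_nonzero[OF max_w_ideal])

lemma mult_notin_m: "s \<notin> m \<Longrightarrow> t \<notin> m \<Longrightarrow> s * t \<notin> m"
  by (rule max_w_ideal_prime[OF max_w_ideal])

lemma scale_Fract_emb_cancel: "s \<noteq> 0 \<Longrightarrow> scale (Fract 1 s) (scale (emb s) x) = x"
  by (simp add: Fract_1_mult_emb)

lemma locM_iff: "y \<in> locM scale m N \<longleftrightarrow> (\<exists>x s. y = scale (Fract 1 s) x \<and> x \<in> N \<and> s \<notin> m)"
  unfolding locM_def by blast

lemma locD_iff: "r \<in> locD m \<longleftrightarrow> (\<exists>a s. r = Fract a s \<and> s \<notin> m)"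
  unfolding locD_def by blast

lemma emb_in_locD: "emb d \<in> locD m"
  unfolding locD_iff emb_def using max_w_ideal_one_notin[OF max_w_ideal] by blast

lemma Fract_1_in_locD: "s \<notin> m \<Longrightarrow> Fract 1 s \<in> locD m"
  unfolding locD_iff by blast

lemma subset_locM: "N \<subseteq> locM scale m N"
proof
  fix x assume "x \<in> N"
  moreover have "x = scale (Fract 1 1) x"
    by (simp flip: One_fract_def)
  ultimately show "x \<in> locM scale m N"
    unfolding locM_iff using max_w_ideal_one_notin[OF max_w_ideal] by blast
qed

lemma locM_mono: "A \<subseteq> B \<Longrightarrow> locM scale m A \<subseteq> locM scale m B"
  unfolding locM_def by blast

lemma rsubmod_locM:
  assumes N: "dsubmod scale N"
  shows "rsubmod scale (locD m) (locM scale m N)"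
  unfolding rsubmod_def
proof (intro conjI ballI)
  show "0 \<in> locM scale m N"
    using subset_locM dsubmod_zero[OF N] by blast
next
  fix y1 y2 assume "y1 \<in> locM scale m N" "y2 \<in> locM scale m N"
  then obtain x s z t where y1: "y1 = scale (Fract 1 s) x" "x \<in> N" "s \<notin> m"
    and y2: "y2 = scale (Fract 1 t) z" "z \<in> N" "t \<notin> m"
    unfolding locM_iff by blast
  have "Fract 1 (s * t) * emb t = Fract 1 s" "Fract 1 (s * t) * emb s = Fract 1 t"
    using notin_m_nonzero y1(3) y2(3) by (simp_all add: emb_def eq_fract)
  then have "y1 + y2 = scale (Fract 1 (s * t)) (scale (emb t) x + scale (emb s) z)"
    by (simp add: y1(1) y2(1) scale_right_distrib)
  moreover have "scale (emb t) x + scale (emb s) z \<in> N"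
    using N y1(2) y2(2) by (simp add: dsubmod_add dsubmod_scale)
  ultimately show "y1 + y2 \<in> locM scale m N"
    unfolding locM_iff using mult_notin_m[OF y1(3) y2(3)] by blast
next
  fix r y assume "r \<in> locD m" "y \<in> locM scale m N"
  then obtain a u x s where r: "r = Fract a u" "u \<notin> m" and y: "y = scale (Fract 1 s) x" "x \<in> N" "s \<notin> m"
    unfolding locD_iff locM_iff by blast
  have "Fract a u * Fract 1 s = Fract 1 (u * s) * emb a"
    by (simp add: emb_def mult.commute)
  then have "scale r y = scale (Fract 1 (u * s)) (scale (emb a) x)"
    by (simp add: r(1) y(1))
  moreover have "scale (emb a) x \<in> N"
    by (rule dsubmod_scale[OF N y(2)])
  ultimately show "scale r y \<in> locM scale m N"
    unfolding locM_iff using mult_notin_m[OF r(2) y(3)] by blast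
qed

lemma rsubmod_dsubmod: "rsubmod scale (locD m) N \<Longrightarrow> dsubmod scale N"
  by (simp add: rsubmod_def dsubmod_def emb_in_locD)

lemma rsubmod_cancel:
  assumes N: "rsubmod scale (locD m) N" and "s \<notin> m" and "scale (emb s) x \<in> N"
  shows "x \<in> N"
proof -
  have "scale (Fract 1 s) (scale (emb s) x) \<in> N"
    using N Fract_1_in_locD[OF assms(2)] assms(3) by (simp add: rsubmod_def del: scale_scale)
  then show ?thesis
    by (simp add: scale_Fract_emb_cancel[OF notin_m_nonzero[OF assms(2)]] del: scale_scale)
qed

lemma locM_subset_rsubmod:
  assumes "A \<subseteq> N" and N: "rsubmod scale (locD m) N"
  shows "locM scale m A \<subseteq> N"
proof
  fix y assume "y \<in> locM scale m A"
  then obtain x s where "y = scale (Fract 1 s) x" "x \<in> A" "s \<notin> m"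
    unfolding locM_iff by blast
  then show "y \<in> N"
    using N Fract_1_in_locD assms(1) by (auto simp: rsubmod_def)
qed

lemma locM_Dspan_subset: "locM scale m (Dspan scale G) \<subseteq> rspan scale (locD m) G"
proof
  fix y assume "y \<in> locM scale m (Dspan scale G)"
  then obtain c s where y: "y = scale (Fract 1 s) (\<Sum>g\<in>G. scale (emb (c g)) g)" and "s \<notin> m"
    unfolding locM_iff Dspan_def by blast
  show "y \<in> rspan scale (locD m) G"
    unfolding rspan_def
  proof (intro CollectI exI conjI)
    show "y = (\<Sum>g\<in>G. scale (Fract (c g) s) g)"
      by (simp add: y scale_sum_right emb_def)
    show "\<forall>g\<in>G. Fract (c g) s \<in> locD m"
      unfolding locD_iff using \<open>s \<notin> m\<close> by blast
  qed
qed

lemma clear_denominators: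
  assumes "finite G" and "G \<subseteq> locM scale m W" and W: "dsubmod scale W"
  shows "\<exists>t. t \<notin> m \<and> scale (emb t) ` G \<subseteq> W"
  using assms(1,2)
proof (induct G rule: finite_induct)
  case empty
  then show ?case
    using max_w_ideal_one_notin[OF max_w_ideal] by blast
next
  case (insert g G)
  have "G \<subseteq> locM scale m W"
    using insert.prems by simp
  then obtain t where t: "t \<notin> m" "scale (emb t) ` G \<subseteq> W"
    using insert.hyps(3) by blast
  have "g \<in> locM scale m W"
    using insert.prems by simp
  then obtain w s where g: "g = scale (Fract 1 s) w" "w \<in> W" "s \<notin> m"
    unfolding locM_iff by blast
  have "scale (emb (t * s)) g = scale (emb t) w"
    using Fract_1_mult_emb[OF notin_m_nonzero[OF g(3)]] by (simp add: g(1) mult.commute)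
  then have "scale (emb (t * s)) g \<in> W"
    using dsubmod_scale[OF W g(2)] by simp
  moreover have "scale (emb (t * s)) h \<in> W" if "h \<in> G" for h
  proof -
    have "scale (emb s) (scale (emb t) h) \<in> W"
      using t(2) that dsubmod_scale[OF W] by blast
    then show ?thesis
      by (simp add: mult.commute)
  qed
  ultimately have "scale (emb (t * s)) ` insert g G \<subseteq> W"
    by blast
  then show ?case
    using mult_notin_m[OF t(1) g(3)] by blast
qed

lemma rsubmod_subset_locM_Int:
  assumes N: "rsubmod scale (locD m) N" and "N \<subseteq> locM scale m M"
  shows "N \<subseteq> locM scale m (N \<inter> M)"
proof
  fix y assume "y \<in> N"
  then have "y \<in> locM scale m M"
    using assms(2) by blast
  then obtain x t where y: "y = scale (Fract 1 t) x" "x \<in> M" "t \<notin> m"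
    unfolding locM_iff by blast
  have "x = scale (emb t) y"
    using Fract_1_mult_emb[OF notin_m_nonzero[OF y(3)]] by (simp add: y(1) mult.commute)
  also have "\<dots> \<in> N"
    using N emb_in_locD \<open>y \<in> N\<close> by (simp add: rsubmod_def del: scale_scale)
  finally show "y \<in> locM scale m (N \<inter> M)"
    unfolding locM_iff using y by blast
qed

text \<open>A GV-ideal J with J x \<subseteq> N either contains some j \<notin> m, and then x = (j x) / j,
  or it is {0}; then D is a field and N is already a subspace.\<close>

lemma wcl_subset_locM:
  assumes N: "dsubmod scale N"
  shows "wcl scale N \<subseteq> locM scale m N"
proof
  fix x assume "x \<in> wcl scale N"
  then obtain J where x: "x \<in> span N" "J \<in> GV" "J \<subseteq> {d. scale (emb d) x \<in> N}"
    unfolding wcl_iff by blast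
  from GV_meets_compl_max_w_ideal[OF max_w_ideal x(2)]
  show "x \<in> locM scale m N"
  proof
    assume "\<exists>j\<in>J. j \<notin> m"
    then obtain j where "j \<notin> m" "scale (emb j) x \<in> N"
      using x(3) by blast
    moreover have "x = scale (Fract 1 j) (scale (emb j) x)"
      using scale_Fract_emb_cancel[OF notin_m_nonzero[OF \<open>j \<notin> m\<close>]] by (simp del: scale_scale)
    ultimately show ?thesis
      unfolding locM_iff by blast
  next
    assume "fracD = (UNIV :: 'a fract set)"
    then have "x \<in> N"
      using x(1) span_eq_if_fracD_UNIV[OF _ N] by simp
    then show ?thesis
      using subset_locM by blast
  qed
qed

lemma wcl_eq_if_locM_saturated:
  assumes "wcl scale M = M" and P: "dsubmod scale P" "P \<subseteq> M" "locM scale m P \<inter> M \<subseteq> P"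
  shows "wcl scale P = P"
proof
  have "wcl scale P \<subseteq> M"
    using wcl_mono[OF P(2)] assms(1) by blast
  then show "wcl scale P \<subseteq> P"
    using wcl_subset_locM[OF P(1)] P(3) by blast
  show "P \<subseteq> wcl scale P"
    by (rule subset_wcl[OF P(1)])
qed

lemma rsubmod_Int_w_module:
  assumes M: "dsubmod scale M" "wcl scale M = M" and N: "rsubmod scale (locD m) N"
  shows "dsubmod scale (N \<inter> M)" and "wcl scale (N \<inter> M) = N \<inter> M"
proof -
  show d: "dsubmod scale (N \<inter> M)"
    by (rule dsubmod_Int[OF rsubmod_dsubmod[OF N] M(1)])
  have "locM scale m (N \<inter> M) \<subseteq> N"
    by (rule locM_subset_rsubmod[OF _ N]) blast
  then show "wcl scale (N \<inter> M) = N \<inter> M"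
    by (intro wcl_eq_if_locM_saturated[OF M(2) d]) auto
qed

lemma noetherian_locM_if_S_SM:
  assumes M: "dsubmod scale M" "wcl scale M = M" and SM: "S_SM scale (- m) M"
  shows "noetherian_over scale (locD m) (locM scale m M)"
  unfolding noetherian_over_iff
proof (intro conjI allI impI)
  show "rsubmod scale (locD m) (locM scale m M)"
    by (rule rsubmod_locM[OF M(1)])
next
  fix N assume "N \<subseteq> locM scale m M \<and> rsubmod scale (locD m) N"
  then have NM: "N \<subseteq> locM scale m M" and N: "rsubmod scale (locD m) N"
    by auto
  note dN' = rsubmod_Int_w_module(1)[OF M N] and w = rsubmod_Int_w_module(2)[OF M N]
  have "S_w_finite scale (- m) M (N \<inter> M)"
    using SM dN' w unfolding S_SM_def by blast
  then obtain s G where s: "s \<notin> m" and G: "finite G" "G \<subseteq> N \<inter> M"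
    "scale (emb s) ` (N \<inter> M) \<subseteq> wcl scale (Dspan scale G)"
    unfolding S_w_finite_iff[OF dN' Int_lower2 w] by blast
  have locF: "rsubmod scale (locD m) (locM scale m (Dspan scale G))"
    by (rule rsubmod_locM[OF Dspan_dsubmod])
  have "N \<inter> M \<subseteq> locM scale m (Dspan scale G)"
  proof
    fix x assume "x \<in> N \<inter> M"
    then have "scale (emb s) x \<in> locM scale m (Dspan scale G)"
      using G(3) wcl_subset_locM[OF Dspan_dsubmod] by blast
    then show "x \<in> locM scale m (Dspan scale G)"
      by (rule rsubmod_cancel[OF locF s])
  qed
  then have "locM scale m (N \<inter> M) \<subseteq> locM scale m (Dspan scale G)"
    by (rule locM_subset_rsubmod[OF _ locF])
  then have "N \<subseteq> rspan scale (locD m) G"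
    using rsubmod_subset_locM_Int[OF N NM] locM_Dspan_subset by blast
  moreover have "rspan scale (locD m) G \<subseteq> N"
    using G(2) by (intro rspan_subset[OF _ N]) blast
  ultimately show "\<exists>G. finite G \<and> G \<subseteq> N \<and> N = rspan scale (locD m) G"
    using G(1,2) by blast
qed

lemma colon_eq_if_S_SM:
  assumes M: "dsubmod scale M" "wcl scale M = M" and SM: "S_SM scale (- m) M"
    and L: "fg_dsub scale M L"
  shows "\<exists>s. s \<notin> m \<and> locM scale m (wcl scale L) \<inter> M = colon scale M (wcl scale L) s"
proof -
  obtain G0 where "G0 \<subseteq> M" "L = Dspan scale G0"
    using L unfolding fg_dsub_def by blast
  then have dL: "dsubmod scale L" and "L \<subseteq> M"
    using Dspan_dsubmod Dspan_subset[OF _ M(1)] by auto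
  define W where "W = wcl scale L"
  have dW: "dsubmod scale W" and wW: "wcl scale W = W"
    unfolding W_def by (rule wcl_dsubmod[OF dL], rule wcl_idem[OF dL])
  have locW: "rsubmod scale (locD m) (locM scale m W)"
    by (rule rsubmod_locM[OF dW])
  define P where "P = locM scale m W \<inter> M"
  have dP: "dsubmod scale P" and w: "wcl scale P = P"
    unfolding P_def by (rule rsubmod_Int_w_module[OF M locW])+
  have PM: "P \<subseteq> M"
    unfolding P_def by blast
  have "S_w_finite scale (- m) M P"
    using SM dP PM w unfolding S_SM_def by blast
  then obtain s G where s: "s \<notin> m" and G: "finite G" "G \<subseteq> P"
    "scale (emb s) ` P \<subseteq> wcl scale (Dspan scale G)"
    unfolding S_w_finite_iff[OF dP PM w] by blast
  obtain t where t: "t \<notin> m" "scale (emb t) ` G \<subseteq> W"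
    using clear_denominators[OF G(1) _ dW] G(2) unfolding P_def by blast
  have "Dspan scale G \<subseteq> {x. scale (emb t) x \<in> W}"
    using t(2) by (intro Dspan_subset dsubmod_vimage_scale[OF dW]) blast
  then have tG: "scale (emb t) ` wcl scale (Dspan scale G) \<subseteq> W"
    using wcl_scale_image[of "emb t" "Dspan scale G" W] wW by blast
  have "P = colon scale M W (t * s)"
  proof
    show "P \<subseteq> colon scale M W (t * s)"
    proof
      fix x assume "x \<in> P"
      then have "scale (emb t) (scale (emb s) x) \<in> W"
        using G(3) tG by blast
      then show "x \<in> colon scale M W (t * s)"
        using \<open>x \<in> P\<close> by (simp add: colon_def P_def)
    qed
    show "colon scale M W (t * s) \<subseteq> P"
    proof
      fix x assume "x \<in> colon scale M W (t * s)"
      then have "x \<in> M" "scale (emb (t * s)) x \<in> locM scale m W"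
        using subset_locM by (auto simp: colon_def)
      then show "x \<in> P"
        using rsubmod_cancel[OF locW mult_notin_m[OF t(1) s]] by (simp add: P_def)
    qed
  qed
  then show ?thesis
    using mult_notin_m[OF t(1) s] unfolding P_def W_def by blast
qed

lemma subset_locM_Dspan_if_generators:
  assumes "finite G'" and "locM scale m L = rspan scale (locD m) G"
    and "t \<notin> m" and "scale (emb t) ` G \<subseteq> G'"
  shows "L \<subseteq> locM scale m (Dspan scale G')"
proof -
  have locF: "rsubmod scale (locD m) (locM scale m (Dspan scale G'))"
    by (rule rsubmod_locM[OF Dspan_dsubmod])
  have "G \<subseteq> locM scale m (Dspan scale G')"
  proof
    fix g assume "g \<in> G"
    then have "scale (emb t) g \<in> Dspan scale G'"
      using assms(4) Dspan_base[OF assms(1)] by blast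
    then show "g \<in> locM scale m (Dspan scale G')"
      using subset_locM rsubmod_cancel[OF locF assms(3)] by blast
  qed
  have "L \<subseteq> rspan scale (locD m) G"
    using subset_locM[of L] assms(2) by simp
  also have "\<dots> \<subseteq> locM scale m (Dspan scale G')"
    by (rule rspan_subset[OF \<open>G \<subseteq> _\<close> locF])
  finally show ?thesis .
qed

lemma S_SM_if_noetherian_colon:
  assumes M: "dsubmod scale M" "wcl scale M = M"
    and N: "noetherian_over scale (locD m) (locM scale m M)"
    and C: "\<forall>L. fg_dsub scale M L \<and> L \<noteq> {0} \<longrightarrow>
        (\<exists>s. s \<notin> m \<and> locM scale m (wcl scale L) \<inter> M = colon scale M (wcl scale L) s)"
  shows "S_SM scale (- m) M"
  unfolding S_SM_def
proof (intro conjI allI impI)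
  fix L assume "dsubmod scale L \<and> L \<subseteq> M \<and> wcl scale L = L"
  then have L: "dsubmod scale L" "L \<subseteq> M" "wcl scale L = L"
    by auto
  show "S_w_finite scale (- m) M L"
    unfolding S_w_finite_iff[OF L]
  proof (cases "L = {0}")
    case True
    then have "scale (emb 1) ` L \<subseteq> wcl scale (Dspan scale {})"
      using subset_wcl[OF Dspan_dsubmod] dsubmod_zero[OF Dspan_dsubmod] by auto
    then show "\<exists>s\<in>- m. \<exists>G. finite G \<and> G \<subseteq> L \<and> scale (emb s) ` L \<subseteq> wcl scale (Dspan scale G)"
      using max_w_ideal_one_notin[OF max_w_ideal] by blast
  next
    case False
    then obtain z where z: "z \<in> L" "z \<noteq> 0"
      using dsubmod_zero[OF L(1)] by blast
    obtain G where G: "finite G" "G \<subseteq> locM scale m L" "locM scale m L = rspan scale (locD m) G"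
      using N rsubmod_locM[OF L(1)] locM_mono[OF L(2)] unfolding noetherian_over_iff by blast
    obtain t where t: "t \<notin> m" "scale (emb t) ` G \<subseteq> L"
      using clear_denominators[OF G(1,2) L(1)] by blast
    define G' where "G' = insert z (scale (emb t) ` G)"
    have G': "finite G'" "G' \<subseteq> L"
      unfolding G'_def using G(1) z(1) t(2) by auto
    define F where "F = Dspan scale G'"
    have "z \<in> F"
      unfolding F_def by (rule Dspan_base[OF G'(1)]) (simp add: G'_def)
    moreover have "fg_dsub scale M F"
      unfolding fg_dsub_def F_def using G' L(2) by blast
    ultimately obtain s where s: "s \<notin> m" "locM scale m (wcl scale F) \<inter> M = colon scale M (wcl scale F) s"
      using C z(2) by blast
    have "L \<subseteq> locM scale m F"
      unfolding F_def by (rule subset_locM_Dspan_if_generators[OF G'(1) G(3) t(1)]) (auto simp: G'_def)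
    also have "\<dots> \<subseteq> locM scale m (wcl scale F)"
      unfolding F_def by (rule locM_mono[OF subset_wcl[OF Dspan_dsubmod]])
    finally have "scale (emb s) ` L \<subseteq> wcl scale F"
      using s(2) L(2) by (auto simp: colon_def)
    then show "\<exists>s\<in>- m. \<exists>G. finite G \<and> G \<subseteq> L \<and> scale (emb s) ` L \<subseteq> wcl scale (Dspan scale G)"
      using s(1) G' unfolding F_def by blast
  qed
qed (use M in auto)

end

theorem proposition3p3:
  fixes scale :: "'a::idom fract \<Rightarrow> 'v::ab_group_add \<Rightarrow> 'v"
    and m :: "'a set" and M :: "'v set"
  assumes "vector_space scale"
    and "max_w_ideal m"
    and "dsubmod scale M"
    and "wcl scale M = M"
  shows "m_SM scale m M \<longleftrightarrow>
    (noetherian_over scale (locD m) (locM scale m M) \<and>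
     (\<forall>L. fg_dsub scale M L \<and> L \<noteq> {0} \<longrightarrow>
        (\<exists>s. s \<notin> m \<and> locM scale m (wcl scale L) \<inter> M = colon scale M (wcl scale L) s)))"
proof -
  interpret max_w_localization scale m
    using assms(1,2) by (simp add: max_w_localization_def max_w_localization_axioms_def fract_vector_space_def)
  show ?thesis
    unfolding m_SM_def
    using noetherian_locM_if_S_SM[OF assms(3,4)] colon_eq_if_S_SM[OF assms(3,4)]
      S_SM_if_noetherian_colon[OF assms(3,4)] by blast
qed

end
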